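(* Let $M^{n+1}$ have non-negative sectional curvature, let $V$ be a self-adjoint family of Jacobi fields along a geodesic $c:[t_0,t_2]\to M$, let $t_1\in(t_0,t_2)$, and suppose $X\in V$ satisfies on $[t_0,t_1]$ the conditions: (a) $\|X\|(t)\neq0$ and $\|X\|'(t)=0$ for $t=t_0,t_1$; (b) if $Y\in V$ and $\langle X(t_1),Y(t_1)\rangle=0$ then $\langle X(t_0),Y(t_0)\rangle=0$; (c) if $Y\in V$ and $Y(t)=0$ for some $t\in(t_0,t_1)$ then $\langle X(t_0),Y(t_0)\rangle=0$; (d) if $Y\in V$ and $Y(t_0)=0$ then $\langle X'(t_0),Y'(t_0)\rangle=0$. If there exists $Y\in V$ with $Y(t^* )=0$ for some $t^*\in(t_1,t_2]$ and $\langle X(t_0),Y(t_0)\rangle\neq0$, then $X$ is not parallel on $[t_0,t_2]$.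
   Context: $c$ is a unit-speed geodesic, $E_t=\dot c(t)^\perp$, $'=\nabla_{\dot c}$. A self-adjoint family of Jacobi fields is an $n$-dimensional vector space $V$ of Jacobi fields along $c$, orthogonal to $\dot c$, with $\langle X',Y\rangle=\langle X,Y'\rangle$ for all $X,Y\in V$. *)

theory Defs
  imports "HOL-Analysis.Analysis"
begin

text \<open>Model along the geodesic c on [a,b]: we identify E_t = (c'(t))^perp with real^'n via a
parallel orthonormal frame (so n = dim M - 1 = CARD('n)).  Covariant differentiation along c
becomes ordinary differentiation, and the curvature endomorphism v |-> R(v, c')c' of E_t becomes
a symmetric matrix Rc t.\<close>

definition cov_deriv :: "real \<Rightarrow> real \<Rightarrow> (real \<Rightarrow> real^'n) \<Rightarrow> real \<Rightarrow> real^'n" where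
  "cov_deriv a b Y t = vector_derivative Y (at t within {a..b})"

text \<open>Curvature operator along c: continuous, symmetric, and (non-negative sectional curvature)
positive semidefinite, i.e. K(v, c') |v|^2 = <R(v,c')c', v> >= 0.\<close>
definition curvature_operator_nonneg :: "real \<Rightarrow> real \<Rightarrow> (real \<Rightarrow> real^'n^'n) \<Rightarrow> bool" where
  "curvature_operator_nonneg a b Rc \<longleftrightarrow>
     continuous_on {a..b} Rc \<and>
     (\<forall>t\<in>{a..b}. transpose (Rc t) = Rc t \<and> (\<forall>v. v \<bullet> (Rc t *v v) \<ge> 0))"

definition jacobi_field :: "real \<Rightarrow> real \<Rightarrow> (real \<Rightarrow> real^'n^'n) \<Rightarrow> (real \<Rightarrow> real^'n) \<Rightarrow> bool" where
  "jacobi_field a b Rc Y \<longleftrightarrow>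
     (\<forall>t\<in>{a..b}. (Y has_vector_derivative cov_deriv a b Y t) (at t within {a..b}) \<and>
        (cov_deriv a b Y has_vector_derivative (- (Rc t *v Y t))) (at t within {a..b}))"

definition n_dim_space :: "(real \<Rightarrow> real^'n) set \<Rightarrow> bool" where
  "n_dim_space V \<longleftrightarrow>
     (\<exists>bs :: 'n \<Rightarrow> real \<Rightarrow> real^'n.
        V = {(\<lambda>t. \<Sum>i\<in>UNIV. c i *\<^sub>R bs i t) | c. True} \<and>
        (\<forall>c. (\<lambda>t. \<Sum>i\<in>UNIV. c i *\<^sub>R bs i t) = (\<lambda>t. 0) \<longrightarrow> (\<forall>i. c i = 0)))"

definition self_adjoint_family ::
  "real \<Rightarrow> real \<Rightarrow> (real \<Rightarrow> real^'n^'n) \<Rightarrow> (real \<Rightarrow> real^'n) set \<Rightarrow> bool" where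
  "self_adjoint_family a b Rc V \<longleftrightarrow>
     n_dim_space V \<and> (\<forall>Y\<in>V. jacobi_field a b Rc Y) \<and>
     (\<forall>X\<in>V. \<forall>Y\<in>V. \<forall>t\<in>{a..b}. cov_deriv a b X t \<bullet> Y t = X t \<bullet> cov_deriv a b Y t)"

definition parallel_on :: "real \<Rightarrow> real \<Rightarrow> (real \<Rightarrow> real^'n) \<Rightarrow> bool" where
  "parallel_on a b X \<longleftrightarrow> (\<forall>t\<in>{a..b}. cov_deriv a b X t = 0)"

end

theory Submission
  imports Defs
begin

text \<open>Along a self-adjoint family the derivative of \<open>\<langle>X, Y\<rangle>\<close> is \<open>2\<langle>X', Y\<rangle>\<close>, so if \<open>X\<close> is
  parallel then \<open>\<langle>X, Y\<rangle>\<close> is constant for every \<open>Y \<in> V\<close>.  A field \<open>Y \<in> V\<close> vanishing at some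
  \<open>t\<^sup>* > t\<^sub>1\<close> then forces \<open>\<langle>X(t\<^sub>0), Y(t\<^sub>0)\<rangle> = \<langle>X(t\<^sup>*), Y(t\<^sup>*)\<rangle> = 0\<close>.\<close>

lemma has_vector_derivative_inner:
  fixes X Y :: "real \<Rightarrow> 'a::real_inner"
  assumes "(X has_vector_derivative X') (at t within S)"
    and "(Y has_vector_derivative Y') (at t within S)"
  shows "((\<lambda>s. X s \<bullet> Y s) has_real_derivative (X t \<bullet> Y' + X' \<bullet> Y t)) (at t within S)"
proof -
  have "((\<lambda>s. X s \<bullet> Y s) has_derivative (\<lambda>h. X t \<bullet> (h *\<^sub>R Y') + (h *\<^sub>R X') \<bullet> Y t))
      (at t within S)"
    using assms unfolding has_vector_derivative_def by (rule has_derivative_inner)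
  moreover have "(\<lambda>h. X t \<bullet> (h *\<^sub>R Y') + (h *\<^sub>R X') \<bullet> Y t) = (*) (X t \<bullet> Y' + X' \<bullet> Y t)"
    by (simp add: fun_eq_iff algebra_simps)
  ultimately show ?thesis
    unfolding has_field_derivative_def by simp
qed

lemma self_adjoint_family_inner_derivative:
  assumes "self_adjoint_family a b Rc V" and "X \<in> V" and "Y \<in> V" and "t \<in> {a..b}"
  shows "((\<lambda>s. X s \<bullet> Y s) has_real_derivative 2 * (cov_deriv a b X t \<bullet> Y t)) (at t within {a..b})"
proof -
  have "(X has_vector_derivative cov_deriv a b X t) (at t within {a..b})"
    and "(Y has_vector_derivative cov_deriv a b Y t) (at t within {a..b})"
    using assms unfolding self_adjoint_family_def jacobi_field_def by blast+
  then have deriv: "((\<lambda>s. X s \<bullet> Y s) has_real_derivative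
      X t \<bullet> cov_deriv a b Y t + cov_deriv a b X t \<bullet> Y t) (at t within {a..b})"
    by (rule has_vector_derivative_inner)
  have "cov_deriv a b X t \<bullet> Y t = X t \<bullet> cov_deriv a b Y t"
    using assms unfolding self_adjoint_family_def by blast
  then have "X t \<bullet> cov_deriv a b Y t + cov_deriv a b X t \<bullet> Y t = 2 * (cov_deriv a b X t \<bullet> Y t)"
    by linarith
  with deriv show ?thesis
    by (simp only:)
qed

lemma parallel_inner_constant:
  assumes "self_adjoint_family a b Rc V" and "X \<in> V" and "Y \<in> V" and "parallel_on a b X"
    and "s \<in> {a..b}" and "t \<in> {a..b}"
  shows "X s \<bullet> Y s = X t \<bullet> Y t"
proof -
  have deriv_zero: "((\<lambda>s. X s \<bullet> Y s) has_real_derivative 0) (at u within {a..b})"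
    if u: "u \<in> {a..b}" for u
  proof -
    have "cov_deriv a b X u = 0"
      using assms(4) u unfolding parallel_on_def by blast
    then show ?thesis
      using self_adjoint_family_inner_derivative[OF assms(1-3) u] by simp
  qed
  obtain k where "\<forall>u\<in>{a..b}. X u \<bullet> Y u = k"
    using has_field_derivative_zero_constant[OF convex_real_interval(5) deriv_zero] by blast
  then show ?thesis
    using assms(5,6) by metis
qed

theorem proposition3p3:
  fixes Rc :: "real \<Rightarrow> real^'n^'n" and V :: "(real \<Rightarrow> real^'n) set"
    and X :: "real \<Rightarrow> real^'n" and t0 t1 t2 :: real
  assumes curv: "curvature_operator_nonneg t0 t2 Rc"
    and V: "self_adjoint_family t0 t2 Rc V"
    and t01: "t0 < t1" and t12: "t1 < t2"
    and XV: "X \<in> V"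
    and a: "\<forall>t\<in>{t0, t1}. X t \<noteq> 0 \<and>
              ((\<lambda>s. norm (X s)) has_real_derivative 0) (at t within {t0..t2})"
    and b: "\<forall>Y\<in>V. X t1 \<bullet> Y t1 = 0 \<longrightarrow> X t0 \<bullet> Y t0 = 0"
    and c: "\<forall>Y\<in>V. (\<exists>t\<in>{t0<..<t1}. Y t = 0) \<longrightarrow> X t0 \<bullet> Y t0 = 0"
    and d: "\<forall>Y\<in>V. Y t0 = 0 \<longrightarrow> cov_deriv t0 t2 X t0 \<bullet> cov_deriv t0 t2 Y t0 = 0"
    and ex: "\<exists>Y\<in>V. (\<exists>ts\<in>{t1<..t2}. Y ts = 0) \<and> X t0 \<bullet> Y t0 \<noteq> 0"
  shows "\<not> parallel_on t0 t2 X"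
proof
  assume par: "parallel_on t0 t2 X"
  from ex obtain Y ts where YV: "Y \<in> V" and ts: "ts \<in> {t1<..t2}" and "Y ts = 0"
    and "X t0 \<bullet> Y t0 \<noteq> 0" by blast
  have "t0 \<in> {t0..t2}" "ts \<in> {t0..t2}"
    using ts t01 t12 by auto
  then have "X t0 \<bullet> Y t0 = X ts \<bullet> Y ts"
    by (rule parallel_inner_constant[OF V XV YV par])
  with \<open>Y ts = 0\<close> \<open>X t0 \<bullet> Y t0 \<noteq> 0\<close> show False
    by simp
qed

end
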